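(* Let $n\ge2$ and $1\le r\le n-1$, and let $M$ be an invertible real $n\times n$ matrix. Let $\mathcal{M}$ be the set of all $P\in\mathbb{R}^{r\times(n-r)}$ such that $$\begin{pmatrix}\mathrm{Id}_r&P\\0&\mathrm{Id}_{n-r}\end{pmatrix}^{-1}M\begin{pmatrix}\mathrm{Id}_r&P\\0&\mathrm{Id}_{n-r}\end{pmatrix}=\begin{pmatrix}*&*\\ *&\hat M\end{pmatrix}$$ with $\hat M$ (the bottom-right $(n-r)\times(n-r)$ block) invertible. Then $\mathcal{M}$ is open and dense in $\mathbb{R}^{r\times(n-r)}$. *)

theory Defs
  imports "HOL-Analysis.Analysis"
begin

text \<open>An n x n matrix is indexed by the disjoint sum 'r + 's, where CARD('r) = r and
  CARD('s) = n - r; the first r coordinates are Inl i, the last n - r are Inr j.\<close>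

definition unipotent_block :: "real^'s::finite^'r::finite \<Rightarrow> real^('r + 's)^('r + 's)" where
  "unipotent_block P = (\<chi> a b.
     (case a of
        Inl i \<Rightarrow> (case b of Inl j \<Rightarrow> (if i = j then 1 else 0) | Inr j \<Rightarrow> P $ i $ j)
      | Inr i \<Rightarrow> (case b of Inl j \<Rightarrow> 0 | Inr j \<Rightarrow> (if i = j then 1 else 0))))"

definition bottom_right_block :: "real^('r::finite + 's::finite)^('r + 's) \<Rightarrow> real^'s^'s" where
  "bottom_right_block A = (\<chi> i j. A $ Inr i $ Inr j)"

end

theory Submission
  imports Defs "HOL-Computational_Algebra.Polynomial"
begin

text \<open>Conjugating by the unipotent matrix with upper-right block \<open>P\<close> turns the bottom-right
  block of \<open>M = [A B; C D]\<close> into \<open>C P + D\<close>, so the set in question is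
  \<open>{P. det (C P + D) \<noteq> 0}\<close>. It is open because \<open>det\<close> is continuous. Along every line
  \<open>P\<^sub>0 + t (P\<^sub>1 - P\<^sub>0)\<close> the function \<open>det (C P + D)\<close> is a polynomial in \<open>t\<close>, so once it is
  nonzero at a single \<open>P\<^sub>1\<close> it has only finitely many zeros on each such line, and the set
  is dense. A suitable \<open>P\<^sub>1\<close> comes from the Schur complement: if \<open>A\<close> is invertible, then
  \<open>P\<^sub>1 = - A\<^sup>-\<^sup>1 B\<close> makes \<open>C P\<^sub>1 + D\<close> the Schur complement of \<open>A\<close> in \<open>M\<close>, which is invertible.
  Replacing \<open>A\<close> by \<open>A + t I\<close> for a large \<open>t\<close> that avoids the finitely many roots of
  \<open>det (M + t diag(I, 0))\<close> secures this without changing \<open>C\<close> and \<open>D\<close>.\<close>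

definition top_left_block :: "'a^('r::finite + 's::finite)^('r + 's) \<Rightarrow> 'a^'r^'r" where
  "top_left_block A = (\<chi> i j. A $ Inl i $ Inl j)"

definition top_right_block :: "'a^('r::finite + 's::finite)^('r + 's) \<Rightarrow> 'a^'s^'r" where
  "top_right_block A = (\<chi> i j. A $ Inl i $ Inr j)"

definition bottom_left_block :: "'a^('r::finite + 's::finite)^('r + 's) \<Rightarrow> 'a^'r^'s" where
  "bottom_left_block A = (\<chi> i j. A $ Inr i $ Inl j)"

definition block_vector :: "'a^'r::finite \<Rightarrow> 'a^'s::finite \<Rightarrow> 'a^('r + 's)" where
  "block_vector x y = (\<chi> a. case a of Inl i \<Rightarrow> x $ i | Inr j \<Rightarrow> y $ j)"

lemma sum_UNIV_Plus:
  "(\<Sum>a\<in>(UNIV :: ('r::finite + 's::finite) set). f a) = (\<Sum>i\<in>UNIV. f (Inl i)) + (\<Sum>j\<in>UNIV. f (Inr j))"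
  by (simp flip: UNIV_Plus_UNIV add: sum.Plus)

lemma block_vector_nth [simp]:
  "block_vector x y $ Inl i = x $ i"
  "block_vector x y $ Inr j = y $ j"
  by (simp_all add: block_vector_def)

lemma block_matrix_vector_mult:
  fixes Z :: "real^('r::finite + 's::finite)^('r + 's)"
  shows "(Z *v block_vector x y) $ Inl i = (top_left_block Z *v x + top_right_block Z *v y) $ i"
    and "(Z *v block_vector x y) $ Inr j = (bottom_left_block Z *v x + bottom_right_block Z *v y) $ j"
  by (simp_all add: matrix_vector_mult_def sum_UNIV_Plus top_left_block_def
      top_right_block_def bottom_left_block_def bottom_right_block_def)

lemma matrix_inv_mult:
  fixes A :: "'a::semiring_1^'n::finite^'n"
  assumes "invertible A"
  shows "A ** matrix_inv A = mat 1" and "matrix_inv A ** A = mat 1"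
  using someI_ex [OF assms [unfolded invertible_def]] by (simp_all add: matrix_inv_def)

lemma matrix_inv_unique:
  fixes A B :: "'a::semiring_1^'n::finite^'n"
  assumes "A ** B = mat 1" and "B ** A = mat 1"
  shows "matrix_inv A = B"
proof -
  have "matrix_inv A ** A = mat 1"
    using assms by (intro matrix_inv_mult) (auto simp: invertible_def)
  have "matrix_inv A = matrix_inv A ** (A ** B)"
    using assms(1) by (simp add: matrix_mul_rid)
  also have "\<dots> = B"
    using \<open>matrix_inv A ** A = mat 1\<close> by (simp add: matrix_mul_assoc matrix_mul_lid)
  finally show ?thesis .
qed

lemma unipotent_block_mult_neg: "unipotent_block P ** unipotent_block (- P) = mat 1"
proof -
  have "(unipotent_block P ** unipotent_block (- P)) $ a $ b = mat 1 $ a $ b" for a b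
    by (cases a; cases b)
      (simp_all add: unipotent_block_def matrix_matrix_mult_def sum_UNIV_Plus mat_def
        if_distrib [where f = "\<lambda>x. x * _"] if_distrib [where f = "\<lambda>x. _ * x"] sum.delta sum.delta'
        cong: if_cong)
  then show ?thesis
    by (simp add: vec_eq_iff)
qed

lemma matrix_inv_unipotent_block: "matrix_inv (unipotent_block P) = unipotent_block (- P)"
  using unipotent_block_mult_neg [of P] unipotent_block_mult_neg [of "- P"]
  by (simp add: matrix_inv_unique)

lemma bottom_right_block_unipotent_conj:
  "bottom_right_block (matrix_inv (unipotent_block P) ** M ** unipotent_block P)
     = bottom_left_block M ** P + bottom_right_block M"
  unfolding matrix_inv_unipotent_block
  by (simp add: vec_eq_iff unipotent_block_def bottom_right_block_def
      bottom_left_block_def matrix_matrix_mult_def sum_UNIV_Plus sum.delta sum.delta'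
      if_distrib [where f = "\<lambda>x. x * _"] if_distrib [where f = "\<lambda>x. _ * x"] cong: if_cong)

lemma invertible_iff_ker_trivial:
  fixes A :: "real^'n::finite^'n"
  shows "invertible A \<longleftrightarrow> (\<forall>x. A *v x = 0 \<longrightarrow> x = 0)"
  by (simp add: invertible_left_inverse matrix_left_invertible_ker)

lemma continuous_on_det: "continuous_on UNIV (det :: real^'n::finite^'n \<Rightarrow> real)"
  unfolding det_def by (intro continuous_intros)

lemma open_invertible: "open {A :: real^'n::finite^'n. invertible A}"
  unfolding invertible_det_nz by (rule open_Collect_neq [OF continuous_on_det continuous_on_const])

lemma det_add_scaleR_poly:
  fixes X Y :: "real^'n::finite^'n"
  shows "\<exists>p. \<forall>t. det (X + t *\<^sub>R Y) = poly p t"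
proof (intro exI allI)
  fix t
  show "det (X + t *\<^sub>R Y) = poly (\<Sum>\<sigma> | \<sigma> permutes UNIV.
      [:of_int (sign \<sigma>):] * (\<Prod>i\<in>UNIV. [:X $ i $ \<sigma> i, Y $ i $ \<sigma> i:])) t"
    by (simp add: det_def poly_sum poly_prod algebra_simps)
qed

lemma poly_nonzero_in_interval:
  fixes p :: "real poly"
  assumes "p \<noteq> 0" and "a < b"
  obtains t where "t \<in> {a..b}" and "poly p t \<noteq> 0"
proof -
  have "infinite ({a..b} - {t. poly p t = 0})"
    using assms by (intro Diff_infinite_finite poly_roots_finite) auto
  then have "{a..b} - {t. poly p t = 0} \<noteq> {}"
    by (metis finite.emptyI)
  then show thesis
    using that by blast
qed

lemma dense_nonzero_if_poly_on_lines:
  fixes f :: "'a::real_normed_vector \<Rightarrow> real"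
  assumes poly_on_lines: "\<And>x y. \<exists>p. \<forall>t. f (x + t *\<^sub>R y) = poly p t"
    and nonzero: "f x\<^sub>1 \<noteq> 0"
  shows "closure {x. f x \<noteq> 0} = UNIV"
proof -
  have "x\<^sub>0 \<in> closure {x. f x \<noteq> 0}" for x\<^sub>0
    unfolding closure_approachable
  proof (intro allI impI)
    fix e :: real
    assume "e > 0"
    define y where "y = x\<^sub>1 - x\<^sub>0"
    obtain p where p: "\<And>t. f (x\<^sub>0 + t *\<^sub>R y) = poly p t"
      using poly_on_lines by blast
    have "poly p 1 \<noteq> 0"
      using nonzero by (simp flip: p add: y_def)
    then have "p \<noteq> 0"
      by auto
    have "norm y + 1 > 0"
      by (simp add: add_nonneg_pos)
    define d where "d = e / (norm y + 1)"
    have "d > 0"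
      using \<open>e > 0\<close> \<open>norm y + 1 > 0\<close> by (simp add: d_def)
    then obtain t where t: "t \<in> {d/2..d}" "poly p t \<noteq> 0"
      using poly_nonzero_in_interval [OF \<open>p \<noteq> 0\<close>, of "d/2" d] by auto
    have "dist (x\<^sub>0 + t *\<^sub>R y) x\<^sub>0 = t * norm y"
      using t(1) \<open>d > 0\<close> by (simp add: dist_norm)
    also have "\<dots> \<le> d * norm y"
      using t(1) by (simp add: mult_right_mono)
    also have "\<dots> < d * (norm y + 1)"
      using \<open>d > 0\<close> by simp
    also have "\<dots> = e"
      using \<open>norm y + 1 > 0\<close> by (simp add: d_def)
    finally have "dist (x\<^sub>0 + t *\<^sub>R y) x\<^sub>0 < e" .
    moreover have "f (x\<^sub>0 + t *\<^sub>R y) \<noteq> 0"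
      using p t(2) by simp
    ultimately show "\<exists>x\<in>{x. f x \<noteq> 0}. dist x x\<^sub>0 < e"
      by blast
  qed
  then show ?thesis
    by blast
qed

lemma invertible_add_large_scalar:
  fixes A :: "real^'n::finite^'n"
  obtains K where "\<And>t. t > K \<Longrightarrow> invertible (A + t *\<^sub>R mat 1)"
proof -
  obtain K where K: "\<And>x. norm (A *v x) \<le> norm x * K"
    using bounded_linear.bounded [OF matrix_vector_mul_bounded_linear] by blast
  have "invertible (A + t *\<^sub>R mat 1)" if "t > K" for t
    unfolding invertible_iff_ker_trivial
  proof (intro allI impI)
    fix x
    assume "(A + t *\<^sub>R mat 1) *v x = 0"
    then have "A *v x = - (t *\<^sub>R x)"
      by (simp add: matrix_vector_mult_add_rdistrib flip: scaleR_matrix_vector_assoc add: eq_neg_iff_add_eq_0)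
    then have "t * norm x \<le> K * norm x"
      using K [of x] abs_ge_self [of t] mult_right_mono [of t "\<bar>t\<bar>" "norm x"]
      by (simp add: mult.commute)
    then have "(t - K) * norm x \<le> 0"
      by (simp add: algebra_simps)
    then show "x = 0"
      using \<open>t > K\<close> by (simp add: mult_le_0_iff)
  qed
  then show thesis
    using that by blast
qed

lemma matrix_mul_neg_right:
  fixes A :: "'a::ring_1^'n::finite^'m::finite" and B :: "'a^'k::finite^'n"
  shows "A ** (- B) = - (A ** B)"
  by (simp add: vec_eq_iff matrix_matrix_mult_def sum_negf)

lemma invertible_schur_complement:
  fixes Z :: "real^('r::finite + 's::finite)^('r + 's)"
  defines "A \<equiv> top_left_block Z" and "B \<equiv> top_right_block Z"
    and "C \<equiv> bottom_left_block Z" and "D \<equiv> bottom_right_block Z"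
  assumes "invertible Z" and "invertible A"
  shows "invertible (D - C ** matrix_inv A ** B)"
  unfolding invertible_iff_ker_trivial
proof (intro allI impI)
  fix y
  assume y: "(D - C ** matrix_inv A ** B) *v y = 0"
  define x where "x = - (matrix_inv A *v (B *v y))"
  have "A *v x + B *v y = 0"
    by (simp add: x_def vec.neg matrix_vector_mul_assoc matrix_mul_assoc matrix_mul_lid
        matrix_inv_mult(1) [OF \<open>invertible A\<close>])
  moreover have "C *v x + D *v y = 0"
    using y by (simp add: x_def vec.neg matrix_vector_mult_diff_rdistrib matrix_vector_mul_assoc
        matrix_mul_assoc)
  ultimately have "(Z *v block_vector x y) $ a = 0" for a
    by (cases a) (simp_all add: block_matrix_vector_mult A_def B_def C_def D_def)
  then have "Z *v block_vector x y = 0"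
    by (simp add: vec_eq_iff)
  then have "block_vector x y = 0"
    using \<open>invertible Z\<close> invertible_iff_ker_trivial by blast
  then show "y = 0"
    by (metis block_vector_nth(2) vec_eq_iff zero_index)
qed

lemma exists_invertible_bottom_left_mult_add_bottom_right:
  fixes M :: "real^('r::finite + 's::finite)^('r + 's)"
  assumes "invertible M"
  shows "\<exists>P. invertible (bottom_left_block M ** P + bottom_right_block M)"
proof -
  define E :: "real^('r + 's)^('r + 's)" where "E = (\<chi> a b. if a = b \<and> isl a then 1 else 0)"
  obtain p where p: "\<And>t. det (M + t *\<^sub>R E) = poly p t"
    using det_add_scaleR_poly by blast
  have "p \<noteq> 0"
    using p [of 0] assms by (auto simp: invertible_det_nz)
  obtain K where K: "\<And>t. t > K \<Longrightarrow> invertible (top_left_block M + t *\<^sub>R mat 1)"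
    using invertible_add_large_scalar by blast
  obtain t where t: "t \<in> {K + 1..K + 2}" "poly p t \<noteq> 0"
    using poly_nonzero_in_interval [OF \<open>p \<noteq> 0\<close>, of "K + 1" "K + 2"] by auto
  define Z where "Z = M + t *\<^sub>R E"
  define A' where "A' = matrix_inv (top_left_block M + t *\<^sub>R mat 1)"
  have "invertible Z"
    using p t(2) by (simp add: Z_def invertible_det_nz)
  moreover have "top_left_block Z = top_left_block M + t *\<^sub>R mat 1"
    by (simp add: vec_eq_iff Z_def E_def top_left_block_def mat_def)
  moreover have "top_right_block Z = top_right_block M"
    and "bottom_left_block Z = bottom_left_block M"
    and "bottom_right_block Z = bottom_right_block M"
    by (simp_all add: vec_eq_iff Z_def E_def top_right_block_def bottom_left_block_def
        bottom_right_block_def)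
  ultimately have "invertible (bottom_right_block M - bottom_left_block M ** A' ** top_right_block M)"
    using invertible_schur_complement [of Z] K t(1) by (simp add: A'_def)
  then have "invertible (bottom_left_block M ** - (A' ** top_right_block M) + bottom_right_block M)"
    by (simp add: matrix_mul_neg_right matrix_mul_assoc)
  then show ?thesis
    by blast
qed

theorem lemma5:
  fixes M :: "real^('r::finite + 's::finite)^('r + 's)"
  assumes "invertible M"
  defines "S \<equiv> {P :: real^'s^'r.
     invertible (bottom_right_block
        (matrix_inv (unipotent_block P) ** M ** unipotent_block P))}"
  shows "open S \<and> closure S = UNIV"
proof
  define C where "C = bottom_left_block M"
  define D where "D = bottom_right_block M"
  have S: "S = (\<lambda>P. C ** P + D) -` {A. invertible A}"
    by (simp add: S_def C_def D_def bottom_right_block_unipotent_conj vimage_def)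
  have "continuous_on UNIV (\<lambda>P. C ** P + D)"
    unfolding matrix_matrix_mult_def by (intro continuous_intros)
  then show "open S"
    unfolding S using open_invertible by (rule open_vimage [rotated])
  have "C ** (P + t *\<^sub>R Q) + D = (C ** P + D) + t *\<^sub>R (C ** Q)" for P Q t
    by (simp add: matrix_add_ldistrib matrix_scalar_ac scalar_matrix_assoc add_ac)
  then have "\<exists>p. \<forall>t. det (C ** (P + t *\<^sub>R Q) + D) = poly p t" for P Q
    using det_add_scaleR_poly [of "C ** P + D" "C ** Q"] by presburger
  moreover obtain P\<^sub>1 where "det (C ** P\<^sub>1 + D) \<noteq> 0"
    using exists_invertible_bottom_left_mult_add_bottom_right [OF assms(1)]
    by (auto simp: C_def D_def invertible_det_nz)
  ultimately show "closure S = UNIV"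
    unfolding S vimage_def mem_Collect_eq invertible_det_nz by (rule dense_nonzero_if_poly_on_lines)
qed

end
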